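(* Let $d\ge 3$. An $\mathcal L_d$-structure is a model of $\mathrm{PQM}_d$ if and only if it is a model of the theory $\mathrm{PQM}'_d$ whose axioms are, for all $p,q\in\mathbb H_d$ and $U\in\mathbb U_d$: ($\top$) $\forall x\,[x:\top]$; ($\neg\bot$) $\exists x\,\neg[x:\bot]$; ($\le$) if $p\le q$: $\forall x\,([x:p]\to[x:q])$; ($\wedge'$) $\forall x\,([x:p]\wedge[x:q]\to[x:p\wedge q])$ (with no compatibility assumption on $p,q$); ($\pi_i$) $\forall x\,([x:p]\to[\pi_q(x):p\,\&\,q])$; ($\pi_e$) $\forall x\,([\pi_q(x):p]\to[x:p\,\delta\,q])$, where $p\,\delta\,q:=q^\bot\vee(p\wedge q)$; ($u_i$) $\forall x\,([x:p]\to[u_U(x):U(p)])$; ($u_e$) $\forall x\,([u_U(x):p]\to[x:U^{-1}(p)])$. In particular, for $d\ge3$, $\mathrm{PQM}_d\models\forall x\,([x:p]\wedge[x:q]\to[x:p\wedge q])$ for all $p,q\in\mathbb H_d$, and $\mathrm{PQM}_d\models\forall x\,([\pi_q(x):p]\to[x:p\,\delta\,q])$ for all $p,q\in\mathbb H_d$.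
   Context: Notation. For $d\ge 1$, $\mathbb H_d$ is the set of complex linear subspaces of $\mathbb C^d$, ordered by inclusion $\le$, with $\top=\mathbb C^d$, $\bot=\{0\}$, $p^\bot$ the orthogonal complement, $p\wedge q=p\cap q$ and $p\vee q=p+q$. $\mathbb U_d$ is the set of unitary operators on $\mathbb C^d$, and for $U\in\mathbb U_d$, $p\in\mathbb H_d$, $U(p)=\{Uv: v\in p\}$. The Sasaki projection is $p\,\&\,q := q\cap(q^\bot+p)$. Subspaces $p,q$ are compatible iff $p=(p\wedge q)\vee(p\wedge q^\bot)$. Language $\mathcal L_d$: a first-order language without equality and without constants, having a unary function symbol $u_U$ for each $U\in\mathbb U_d$, a unary function symbol $\pi_q$ for each $q\in\mathbb H_d$, and a unary relation symbol $[\,\cdot:p]$ for each $p\in\mathbb H_d$. Theory $\mathrm{PQM}_d$ (over $\mathcal L_d$) has the following axioms, for all $p,q\in\mathbb H_d$ and $U\in\mathbb U_d$: ($\neg\bot$) $\exists x\,\neg[x:\bot]$; ($\top$) $\forall x\,[x:\top]$; ($\le$) if $p\le q$: $\forall x\,([x:p]\to[x:q])$; ($\wedge$) if $p,q$ are compatible: $\forall x\,([x:p]\wedge[x:q]\to[x:p\wedge q])$; ($\pi_i$) $\forall x\,([x:p]\to[\pi_q(x):p\,\&\,q])$; ($\pi_c$) if $p\le q$: $\forall x\,([\pi_p(\pi_q(x)):\bot]\to[\pi_p(x):\bot])$; ($\pi_\bot$) $\forall x\,([\pi_q(x):\bot]\to[x:q^\bot])$; ($u_i$) $\forall x\,([x:p]\to[u_U(x):U(p)])$;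 ($u_e$) $\forall x\,([u_U(x):p]\to[x:U^{-1}(p)])$. *)

theory Defs
  imports "HOL-Analysis.Analysis"
begin

text \<open>The ambient space C^d is complex ^ 'n, with d = CARD('n).
  H_d = complex linear subspaces (vec.subspace, scalars acting by (*s)).\<close>

type_synonym 'n cvec = "complex ^ 'n"
type_synonym 'n cmat = "complex ^ 'n ^ 'n"

definition cinner :: "'n::finite cvec \<Rightarrow> 'n cvec \<Rightarrow> complex" where
  "cinner v w = (\<Sum>i\<in>UNIV. v $ i * cnj (w $ i))"

definition Hd :: "'n::finite cvec set set" where
  "Hd = {S. vec.subspace S}"

definition htop :: "'n::finite cvec set" where "htop = UNIV"
definition hbot :: "'n::finite cvec set" where "hbot = {0}"

definition ortho :: "'n::finite cvec set \<Rightarrow> 'n cvec set" where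
  "ortho p = {v. \<forall>w\<in>p. cinner v w = 0}"

definition hjoin :: "'n::finite cvec set \<Rightarrow> 'n cvec set \<Rightarrow> 'n cvec set" where
  "hjoin p q = {x + y | x y. x \<in> p \<and> y \<in> q}"

definition hmeet :: "'n::finite cvec set \<Rightarrow> 'n cvec set \<Rightarrow> 'n cvec set" where
  "hmeet p q = p \<inter> q"

definition sasaki :: "'n::finite cvec set \<Rightarrow> 'n cvec set \<Rightarrow> 'n cvec set" where
  "sasaki p q = hmeet q (hjoin (ortho q) p)"

definition sdelta :: "'n::finite cvec set \<Rightarrow> 'n cvec set \<Rightarrow> 'n cvec set" where
  "sdelta p q = hjoin (ortho q) (hmeet p q)"

definition compatible :: "'n::finite cvec set \<Rightarrow> 'n cvec set \<Rightarrow> bool" where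
  "compatible p q \<longleftrightarrow> p = hjoin (hmeet p q) (hmeet p (ortho q))"

definition adjoint_mat :: "'n::finite cmat \<Rightarrow> 'n cmat" where
  "adjoint_mat U = (\<chi> i j. cnj (U $ j $ i))"

definition unitary :: "'n::finite cmat \<Rightarrow> bool" where
  "unitary U \<longleftrightarrow> U ** adjoint_mat U = mat 1 \<and> adjoint_mat U ** U = mat 1"

definition Ud :: "'n::finite cmat set" where
  "Ud = {U. unitary U}"

definition uimg :: "'n::finite cmat \<Rightarrow> 'n cvec set \<Rightarrow> 'n cvec set" where
  "uimg U p = (\<lambda>v. U *v v) ` p"

text \<open>An L_d-structure with universe the type 'a (nonempty) is given by
  u (interpreting u_U), proj (interpreting pi_q) and R (interpreting [. : p]).
  Only values at unitaries / subspaces matter.\<close>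

definition PQM ::
  "('n::finite cmat \<Rightarrow> 'a \<Rightarrow> 'a) \<Rightarrow> ('n cvec set \<Rightarrow> 'a \<Rightarrow> 'a) \<Rightarrow> ('n cvec set \<Rightarrow> 'a \<Rightarrow> bool) \<Rightarrow> bool"
where
  "PQM u proj R \<longleftrightarrow>
     (\<exists>x. \<not> R hbot x) \<and>
     (\<forall>x. R htop x) \<and>
     (\<forall>p\<in>Hd. \<forall>q\<in>Hd. p \<subseteq> q \<longrightarrow> (\<forall>x. R p x \<longrightarrow> R q x)) \<and>
     (\<forall>p\<in>Hd. \<forall>q\<in>Hd. compatible p q \<longrightarrow> (\<forall>x. R p x \<and> R q x \<longrightarrow> R (hmeet p q) x)) \<and>
     (\<forall>p\<in>Hd. \<forall>q\<in>Hd. \<forall>x. R p x \<longrightarrow> R (sasaki p q) (proj q x)) \<and>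
     (\<forall>p\<in>Hd. \<forall>q\<in>Hd. p \<subseteq> q \<longrightarrow> (\<forall>x. R hbot (proj p (proj q x)) \<longrightarrow> R hbot (proj p x))) \<and>
     (\<forall>q\<in>Hd. \<forall>x. R hbot (proj q x) \<longrightarrow> R (ortho q) x) \<and>
     (\<forall>p\<in>Hd. \<forall>U\<in>Ud. \<forall>x. R p x \<longrightarrow> R (uimg U p) (u U x)) \<and>
     (\<forall>p\<in>Hd. \<forall>U\<in>Ud. \<forall>x. R p (u U x) \<longrightarrow> R (uimg (matrix_inv U) p) x)"

definition PQM' ::
  "('n::finite cmat \<Rightarrow> 'a \<Rightarrow> 'a) \<Rightarrow> ('n cvec set \<Rightarrow> 'a \<Rightarrow> 'a) \<Rightarrow> ('n cvec set \<Rightarrow> 'a \<Rightarrow> bool) \<Rightarrow> bool"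
where
  "PQM' u proj R \<longleftrightarrow>
     (\<forall>x. R htop x) \<and>
     (\<exists>x. \<not> R hbot x) \<and>
     (\<forall>p\<in>Hd. \<forall>q\<in>Hd. p \<subseteq> q \<longrightarrow> (\<forall>x. R p x \<longrightarrow> R q x)) \<and>
     (\<forall>p\<in>Hd. \<forall>q\<in>Hd. \<forall>x. R p x \<and> R q x \<longrightarrow> R (hmeet p q) x) \<and>
     (\<forall>p\<in>Hd. \<forall>q\<in>Hd. \<forall>x. R p x \<longrightarrow> R (sasaki p q) (proj q x)) \<and>
     (\<forall>p\<in>Hd. \<forall>q\<in>Hd. \<forall>x. R p (proj q x) \<longrightarrow> R (sdelta p q) x) \<and>
     (\<forall>p\<in>Hd. \<forall>U\<in>Ud. \<forall>x. R p x \<longrightarrow> R (uimg U p) (u U x)) \<and>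
     (\<forall>p\<in>Hd. \<forall>U\<in>Ud. \<forall>x. R p (u U x) \<longrightarrow> R (uimg (matrix_inv U) p) x)"

end

theory Submission
  imports Defs
begin

(*
  Call subspaces a and b exclusive if [x:a] and [x:b] together force [x:\<bottom>]. Orthogonal
  subspaces are compatible, hence exclusive by (\<wedge>). If the projections of u and v onto the
  hyperplane k^\<bottom> are orthogonal, then (\<pi>_i) sends [x:u] and [x:v] to exclusive lines inside
  k^\<bottom>, and (\<pi>_\<bottom>) turns the resulting [\<pi>(x):\<bottom>] into [x:k]. For d \<ge> 3 and
  9|<u,v>|^2 \<le> |u|^2|v|^2 there are two orthogonal such k, so the lines u and v are exclusive.
  A rotation inside span{u, w}, with w orthogonal to u and v, doubles M in the admissible
  condition (1 + M)|<u,v>|^2 \<le> M|u|^2|v|^2, so any two distinct lines are exclusive, and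
  induction on dimension, splitting off a line e through the hyperplane e^\<bottom>, extends this to
  any two subspaces meeting only in 0.
  For (\<wedge>') project onto m^\<bottom>, m = p \<wedge> q: by (\<pi>_i) the image lies in the exclusive
  subspaces m^\<bottom> \<wedge> p and m^\<bottom> \<wedge> q, and (\<pi>_\<bottom>) gives [x:m]. (\<pi>_e) follows from
  (\<wedge>') and (\<pi>_c) for the subspace q \<wedge> m^\<bottom> of q; conversely (\<pi>_\<bottom>) and (\<pi>_c) are
  consequences of (\<pi>_e) and (\<pi>_i).
*)

lemma cinner_add_left: "cinner (x + y) z = cinner x z + cinner y z"
  by (simp add: cinner_def sum.distrib distrib_right)

lemma cinner_add_right: "cinner x (y + z) = cinner x y + cinner x z"
  by (simp add: cinner_def sum.distrib distrib_left)

lemma cinner_diff_left: "cinner (x - y) z = cinner x z - cinner y z"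
  by (simp add: cinner_def sum_subtractf left_diff_distrib)

lemma cinner_diff_right: "cinner x (y - z) = cinner x y - cinner x z"
  by (simp add: cinner_def sum_subtractf right_diff_distrib)

lemma cinner_scale_left: "cinner (c *s x) z = c * cinner x z"
  by (simp add: cinner_def sum_distrib_left mult.assoc)

lemma cinner_scale_right: "cinner x (c *s z) = cnj c * cinner x z"
  by (simp add: cinner_def sum_distrib_left mult_ac)

lemma cinner_zero_left [simp]: "cinner 0 z = 0"
  by (simp add: cinner_def)

lemma cinner_zero_right [simp]: "cinner z 0 = 0"
  by (simp add: cinner_def)

lemma cinner_commute: "cinner y x = cnj (cinner x y)"
  by (simp add: cinner_def mult.commute)

lemma cinner_commute_eq_0: "cinner x y = 0 \<Longrightarrow> cinner y x = 0"
  by (simp add: cinner_commute[of y x])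

lemma Re_cinner: "Re (cinner v w) = inner v w"
  by (simp add: cinner_def inner_vec_def inner_complex_def Re_sum)

lemma Im_cinner: "Im (cinner v w) = inner v (\<i> *s w)"
  by (simp add: cinner_def inner_vec_def inner_complex_def Im_sum)

lemma cinner_self: "cinner x x = complex_of_real (inner x x)"
  by (simp add: complex_eq_iff Re_cinner Im_cinner inner_vec_def inner_complex_def)

lemma cinner_self_eq_0 [simp]: "cinner x x = 0 \<longleftrightarrow> x = 0"
  by (simp add: cinner_self)

lemma cinner_eq_0_if_inner_eq_0:
  "inner z w = 0 \<Longrightarrow> inner z (\<i> *s w) = 0 \<Longrightarrow> cinner z w = 0"
  by (simp add: complex_eq_iff Re_cinner Im_cinner)

lemma cinner_orthogonal_triple:
  assumes "cinner u e = 0" "cinner u w = 0" "cinner e w = 0"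
  shows "cinner (a1 *s u + b1 *s e + c1 *s w) (a2 *s u + b2 *s e + c2 *s w)
       = a1 * cnj a2 * cinner u u + b1 * cnj b2 * cinner e e + c1 * cnj c2 * cinner w w"
  using assms cinner_commute_eq_0[OF assms(1)] cinner_commute_eq_0[OF assms(2)]
    cinner_commute_eq_0[OF assms(3)]
  by (simp add: cinner_add_left cinner_add_right cinner_scale_left cinner_scale_right algebra_simps)

lemma mem_Hd_iff: "p \<in> Hd \<longleftrightarrow> vec.subspace p"
  by (simp add: Hd_def)

abbreviation line :: "'n::finite cvec \<Rightarrow> 'n cvec set" where
  "line e \<equiv> vec.span {e}"

lemma mem_line_iff: "x \<in> line e \<longleftrightarrow> (\<exists>k. x = k *s e)"
  by (auto simp: vec.span_singleton)

lemma scaleR_eq_scale_of_real: "r *\<^sub>R (x::'n::finite cvec) = complex_of_real r *s x"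
  by (simp add: vec_eq_iff) (simp add: scaleR_conv_of_real)

lemma span_eq_if_vec_subspace: "vec.subspace S \<Longrightarrow> span (S::'n::finite cvec set) = S"
  unfolding span_eq_iff vec.subspace_def subspace_def by (simp add: scaleR_eq_scale_of_real)

lemma vec_subspace_ortho: "vec.subspace (ortho p)"
  unfolding vec.subspace_def ortho_def by (simp add: cinner_add_left cinner_scale_left)

lemma vec_subspace_hmeet: "vec.subspace p \<Longrightarrow> vec.subspace q \<Longrightarrow> vec.subspace (hmeet p q)"
  by (simp add: hmeet_def vec.subspace_inter)

lemma hjoin_eq_span:
  "vec.subspace p \<Longrightarrow> vec.subspace q \<Longrightarrow> hjoin p q = vec.span (p \<union> q)"
  by (simp add: hjoin_def vec.span_Un vec.span_eq_iff[THEN iffD2])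

lemma vec_subspace_hjoin: "vec.subspace p \<Longrightarrow> vec.subspace q \<Longrightarrow> vec.subspace (hjoin p q)"
  by (simp add: hjoin_eq_span vec.subspace_span)

lemma vec_subspace_hbot: "vec.subspace hbot"
  by (simp add: hbot_def vec.subspace_def)

lemma vec_subspace_htop: "vec.subspace htop"
  by (simp add: htop_def vec.subspace_UNIV)

lemma vec_subspace_sasaki: "vec.subspace p \<Longrightarrow> vec.subspace q \<Longrightarrow> vec.subspace (sasaki p q)"
  by (simp add: sasaki_def vec_subspace_hmeet vec_subspace_hjoin vec_subspace_ortho)

lemma vec_subspace_sdelta: "vec.subspace p \<Longrightarrow> vec.subspace q \<Longrightarrow> vec.subspace (sdelta p q)"
  by (simp add: sdelta_def vec_subspace_hmeet vec_subspace_hjoin vec_subspace_ortho)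

lemma mem_ortho_self: "x \<in> p \<Longrightarrow> x \<in> ortho p \<Longrightarrow> x = 0"
  unfolding ortho_def using cinner_self_eq_0 by blast

lemma cinner_mem_ortho: "x \<in> ortho p \<Longrightarrow> y \<in> p \<Longrightarrow> cinner y x = 0"
  unfolding ortho_def using cinner_commute_eq_0 by blast

lemma ortho_antimono: "p \<subseteq> q \<Longrightarrow> ortho q \<subseteq> ortho p"
  unfolding ortho_def by auto

lemma subset_ortho_ortho: "p \<subseteq> ortho (ortho p)"
  using cinner_mem_ortho unfolding ortho_def by blast

lemma ortho_decomp:
  assumes "vec.subspace p"
  obtains y z where "y \<in> p" "z \<in> ortho p" "x = y + z"
proof -
  have p: "span p = p"
    using assms by (rule span_eq_if_vec_subspace)
  obtain y z where "y \<in> span p" and z: "\<And>w. w \<in> span p \<Longrightarrow> orthogonal z w" and "x = y + z"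
    using orthogonal_subspace_decomp_exists[of p x] by blast
  moreover have "z \<in> ortho p"
    unfolding ortho_def
  proof (intro CollectI ballI cinner_eq_0_if_inner_eq_0)
    fix w assume "w \<in> p"
    then show "inner z w = 0" and "inner z (\<i> *s w) = 0"
      using z[of w] z[of "\<i> *s w"] vec.subspace_scale[OF assms] p by (simp_all add: orthogonal_def)
  qed
  ultimately show ?thesis
    using that p by blast
qed

lemma ortho_ortho:
  assumes "vec.subspace p"
  shows "ortho (ortho p) = p"
proof
  show "ortho (ortho p) \<subseteq> p"
  proof
    fix x assume x: "x \<in> ortho (ortho p)"
    obtain y z where y: "y \<in> p" and z: "z \<in> ortho p" and x_eq: "x = y + z"
      using ortho_decomp[OF assms] .
    have "cinner x z = 0" and "cinner y z = 0"
      using x z cinner_mem_ortho[OF z y] unfolding ortho_def by blast+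
    then have "cinner z z = 0"
      using x_eq by (simp add: cinner_add_left)
    then show "x \<in> p"
      using x_eq y by simp
  qed
qed (rule subset_ortho_ortho)

lemma ortho_line_ortho: "ortho (ortho (line e)) = line e"
  by (simp add: ortho_ortho vec.subspace_span)

lemma line_subset: "vec.subspace a \<Longrightarrow> e \<in> a \<Longrightarrow> line e \<subseteq> a"
  by (simp add: vec.span_minimal)

lemma line_subset_ortho_line: "cinner u v = 0 \<Longrightarrow> line u \<subseteq> ortho (line v)"
  by (auto simp: mem_line_iff ortho_def cinner_scale_left cinner_scale_right)

lemma hjoin_subset: "vec.subspace c \<Longrightarrow> p \<subseteq> c \<Longrightarrow> q \<subseteq> c \<Longrightarrow> hjoin p q \<subseteq> c"
  by (auto simp: hjoin_def intro!: vec.subspace_add)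

lemma hjoin_absorb: "vec.subspace p \<Longrightarrow> vec.subspace q \<Longrightarrow> q \<subseteq> p \<Longrightarrow> hjoin q p = p"
  by (simp add: hjoin_eq_span Un_absorb1 vec.span_eq_iff[THEN iffD2])

lemma ortho_hmeet_ortho_subset:
  assumes q: "vec.subspace q" and m: "vec.subspace m" and "m \<subseteq> q"
  shows "ortho (hmeet q (ortho m)) \<subseteq> hjoin (ortho q) m"
proof
  fix x assume x: "x \<in> ortho (hmeet q (ortho m))"
  obtain x1 x2 where x1: "x1 \<in> q" and x2: "x2 \<in> ortho q" and x_eq: "x = x1 + x2"
    using ortho_decomp[OF q] .
  obtain m1 r where m1: "m1 \<in> m" and r: "r \<in> ortho m" and x1_eq: "x1 = m1 + r"
    using ortho_decomp[OF m] .
  have "r = x1 - m1"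
    using x1_eq by simp
  then have "r \<in> q"
    using vec.subspace_diff[OF q x1] m1 \<open>m \<subseteq> q\<close> by auto
  then have "cinner x r = 0" and "cinner x2 r = 0" and "cinner m1 r = 0"
    using x r x2 cinner_mem_ortho[OF r m1] unfolding ortho_def hmeet_def by blast+
  then have "cinner r r = 0"
    using x_eq x1_eq by (simp add: cinner_add_left)
  then have "x = x2 + m1"
    using x_eq x1_eq by simp
  then show "x \<in> hjoin (ortho q) m"
    using x2 m1 by (auto simp: hjoin_def)
qed

lemma sasaki_eq_hmeet: "vec.subspace p \<Longrightarrow> ortho q \<subseteq> p \<Longrightarrow> sasaki p q = hmeet q p"
  by (simp add: sasaki_def hjoin_absorb vec_subspace_ortho)

lemma sasaki_subset_hbot: "q \<subseteq> ortho p \<Longrightarrow> sasaki q p \<subseteq> hbot"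
  using hjoin_subset[OF vec_subspace_ortho subset_refl, of q p] mem_ortho_self[of _ p]
  by (auto simp: sasaki_def hmeet_def hbot_def)

lemma sasaki_htop: "sasaki htop q = q"
  by (simp add: sasaki_eq_hmeet htop_def vec.subspace_UNIV hmeet_def)

lemma sdelta_hbot:
  assumes "vec.subspace q"
  shows "sdelta hbot q = ortho q"
proof -
  have "hmeet hbot q = hbot"
    using assms vec.subspace_0 by (auto simp: hmeet_def hbot_def)
  then show ?thesis
    using hjoin_eq_span[OF vec_subspace_ortho, of hbot q]
    by (simp add: sdelta_def hbot_def vec.subspace_def vec.span_eq_iff[THEN iffD2, OF vec_subspace_ortho])
qed

(* Projection onto the hyperplane k^\<bottom>; for k = 0 the division by zero makes it the identity,
   which is why the lemmas below need no hypothesis k \<noteq> 0. *)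
definition hyperplane_proj :: "'n::finite cvec \<Rightarrow> 'n cvec \<Rightarrow> 'n cvec" where
  "hyperplane_proj k x = x - (cinner x k / cinner k k) *s k"

lemma cinner_hyperplane_proj_eq_0: "cinner (hyperplane_proj k x) k = 0"
  by (cases "k = 0") (simp_all add: hyperplane_proj_def cinner_diff_left cinner_scale_left)

lemma cinner_hyperplane_proj_right:
  "cinner y k = 0 \<Longrightarrow> cinner y (hyperplane_proj k x) = cinner y x"
  by (simp add: hyperplane_proj_def cinner_diff_right cinner_scale_right)

lemma cinner_hyperplane_proj:
  "cinner (hyperplane_proj k u) (hyperplane_proj k v) = cinner u v - cinner u k * cinner k v / cinner k k"
  by (simp add: cinner_hyperplane_proj_right cinner_hyperplane_proj_eq_0)
    (simp add: hyperplane_proj_def cinner_diff_left cinner_scale_left)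

lemma inner_hyperplane_proj_self:
  "inner (hyperplane_proj k x) (hyperplane_proj k x) = inner x x - (cmod (cinner x k))^2 / inner k k"
proof -
  have "cinner x k * cinner k x = complex_of_real ((cmod (cinner x k))^2)"
    by (simp add: cinner_commute[of k x] complex_mult_cnj cmod_power2)
  then have "complex_of_real (inner (hyperplane_proj k x) (hyperplane_proj k x))
      = complex_of_real (inner x x - (cmod (cinner x k))^2 / inner k k)"
    using cinner_hyperplane_proj[of k x x] by (simp add: cinner_self)
  then show ?thesis
    by (simp only: of_real_eq_iff)
qed

lemma hyperplane_proj_add: "hyperplane_proj k (x + y) = hyperplane_proj k x + hyperplane_proj k y"
  by (simp add: hyperplane_proj_def cinner_add_left add_divide_distrib vec.scale_left_distrib algebra_simps)

lemma hyperplane_proj_scale: "hyperplane_proj k (c *s x) = c *s hyperplane_proj k x"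
  by (simp add: hyperplane_proj_def cinner_scale_left vec.scale_right_diff_distrib)

lemma hyperplane_proj_eq_0: "hyperplane_proj k x = 0 \<Longrightarrow> x \<in> line k"
  by (auto simp: hyperplane_proj_def mem_line_iff)

lemma sasaki_ortho_line_subset: "sasaki b (ortho (line k)) \<subseteq> hyperplane_proj k ` b"
proof
  fix x assume "x \<in> sasaki b (ortho (line k))"
  then have x: "x \<in> ortho (line k)" and "x \<in> hjoin (line k) b"
    by (simp_all add: sasaki_def hmeet_def ortho_line_ortho)
  then obtain a y where x_eq: "x = a *s k + y" and "y \<in> b"
    by (auto simp: hjoin_def mem_line_iff)
  have "hyperplane_proj k x = x"
    using x vec.span_base[of k "{k}"] by (simp add: hyperplane_proj_def ortho_def)
  moreover have "hyperplane_proj k (a *s k) = 0"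
    by (cases "k = 0") (simp_all add: hyperplane_proj_def cinner_scale_left)
  ultimately show "x \<in> hyperplane_proj k ` b"
    using x_eq \<open>y \<in> b\<close> by (metis add_0 hyperplane_proj_add image_eqI)
qed

lemma sasaki_line_subset: "sasaki (line u) (ortho (line k)) \<subseteq> line (hyperplane_proj k u)"
proof
  fix x assume "x \<in> sasaki (line u) (ortho (line k))"
  then obtain y where "y \<in> line u" "x = hyperplane_proj k y"
    using sasaki_ortho_line_subset by blast
  then show "x \<in> line (hyperplane_proj k u)"
    by (auto simp: mem_line_iff hyperplane_proj_scale)
qed

lemma dim_hmeet_ortho_line_less:
  assumes "vec.subspace a" "e \<in> a" "e \<noteq> 0"
  shows "vec.dim (hmeet a (ortho (line e))) < vec.dim a"
proof (rule vec.dim_psubset)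
  have "e \<notin> ortho (line e)"
    using mem_ortho_self[OF vec.span_base[of e "{e}"]] \<open>e \<noteq> 0\<close> by blast
  then show "vec.span (hmeet a (ortho (line e))) \<subset> vec.span a"
    using assms by (auto simp: hmeet_def vec.span_eq_iff[THEN iffD2] vec_subspace_ortho
        vec.subspace_inter)
qed

lemma dim_sasaki_ortho_line_le: "vec.dim (sasaki b (ortho (line k))) \<le> vec.dim b"
proof -
  have "Vector_Spaces.linear (*s) (*s) (hyperplane_proj k)"
    by (simp add: Vector_Spaces.linear_iff vec.vector_space_axioms hyperplane_proj_add
        hyperplane_proj_scale)
  then have "vec.dim (hyperplane_proj k ` b) \<le> vec.dim b"
    by (rule vec.dim_image_le)
  then show ?thesis
    using vec.dim_subset[OF sasaki_ortho_line_subset] order_trans by blast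
qed

lemma hmeet_ortho_line_inter_sasaki:
  assumes a: "vec.subspace a" and "e \<in> a" "a \<inter> b \<subseteq> {0}"
  shows "hmeet a (ortho (line e)) \<inter> sasaki b (ortho (line e)) \<subseteq> {0}"
proof
  fix z assume z: "z \<in> hmeet a (ortho (line e)) \<inter> sasaki b (ortho (line e))"
  then obtain k y where z_eq: "z = k *s e + y" and "y \<in> b"
    by (auto simp: sasaki_def hmeet_def hjoin_def ortho_line_ortho mem_line_iff)
  have "y = z - k *s e"
    using z_eq by simp
  then have "y \<in> a"
    using z \<open>e \<in> a\<close> a by (simp add: hmeet_def vec.subspace_diff vec.subspace_scale)
  then have "z \<in> line e"
    using \<open>y \<in> b\<close> assms(3) z_eq by (auto simp: mem_line_iff)
  then show "z \<in> {0}"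
    using z mem_ortho_self by (auto simp: hmeet_def)
qed

lemma dim_le_1_cases:
  assumes "vec.subspace a" "vec.dim a \<le> 1"
  obtains "a \<subseteq> {0}" | e where "e \<noteq> 0" "a = line e"
proof (cases "vec.dim a = 0")
  case False
  obtain B where "B \<subseteq> a" "vec.independent B" "a \<subseteq> vec.span B" "card B = vec.dim a"
    using vec.basis_exists .
  moreover have "card B = 1"
    using False assms(2) \<open>card B = vec.dim a\<close> by linarith
  then obtain e where "B = {e}"
    by (rule card_1_singletonE)
  ultimately show ?thesis
    using that(2)[of e] assms(1) by (simp add: line_subset subset_antisym)
qed (use that in simp)

lemma exists_ortho_pair:
  fixes u v :: "'n::finite cvec"
  assumes "CARD('n) \<ge> 3" "r > 0"
  obtains w where "inner w w = r" "cinner w u = 0" "cinner w v = 0"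
proof -
  \<comment> \<open>real orthogonality to u, i u, v, i v is complex orthogonality to u and v\<close>
  let ?S = "{u, \<i> *s u, v, \<i> *s v}"
  have "dim ?S \<le> card ?S"
    by (rule dim_le_card) (auto intro: span_base)
  also have "card ?S \<le> 4"
    using card_length[of "[u, \<i> *s u, v, \<i> *s v]"] by simp
  finally have "dim ?S < DIM('n cvec)"
    using assms(1) by simp
  then obtain w0 where "w0 \<noteq> 0" and w0: "\<And>y. y \<in> span ?S \<Longrightarrow> orthogonal w0 y"
    by (metis orthogonal_to_subspace_exists)
  have "inner w0 y = 0" if "y \<in> ?S" for y
    using w0[of y] span_base[OF that] by (simp add: orthogonal_def)
  then have "cinner w0 u = 0" "cinner w0 v = 0"
    by (simp_all add: cinner_eq_0_if_inner_eq_0)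
  define s where "s = sqrt (r / inner w0 w0)"
  define w where "w = complex_of_real s *s w0"
  have "cinner w w = complex_of_real (s * s * inner w0 w0)"
    by (simp add: w_def cinner_scale_left cinner_scale_right cinner_self[of w0])
  also have "s * s * inner w0 w0 = r"
    using \<open>w0 \<noteq> 0\<close> \<open>r > 0\<close> by (simp add: s_def)
  finally have "inner w w = r"
    by (simp add: cinner_self)
  moreover have "cinner w u = 0" "cinner w v = 0"
    using \<open>cinner w0 u = 0\<close> \<open>cinner w0 v = 0\<close> by (simp_all add: w_def cinner_scale_left)
  ultimately show ?thesis
    by (rule that)
qed

lemma cmod_cinner_sq_less:
  assumes "e \<noteq> 0" "f \<notin> line e"
  shows "(cmod (cinner e f))^2 < inner e e * inner f f"
proof -
  have "0 < inner (hyperplane_proj e f) (hyperplane_proj e f)"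
    using assms(2) hyperplane_proj_eq_0 by auto
  then have "(cmod (cinner f e))^2 / inner e e < inner f f"
    using inner_hyperplane_proj_self[of e f] by linarith
  moreover have "cmod (cinner f e) = cmod (cinner e f)"
    by (simp add: cinner_commute[of f e])
  ultimately show ?thesis
    using assms(1) by (simp add: pos_divide_less_eq mult.commute)
qed

lemma quadratic_root_ge_1:
  fixes a E :: real
  assumes "a > 0" "E \<ge> 8 * a"
  obtains t where "t \<ge> 1" "a * t * t - E * t + 2 * E = 0"
proof -
  define s where "s = sqrt (E * (E - 8 * a))"
  have "E * (E - 8 * a) \<ge> 0"
    using assms by simp
  then have s: "s * s = E * (E - 8 * a)" "s \<ge> 0"
    by (simp_all add: s_def)
  define t where "t = (E + s) / (2 * a)"
  have "1 \<le> E / (2 * a)"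
    using assms by (simp add: pos_le_divide_eq)
  also have "\<dots> \<le> t"
    using assms s(2) by (simp add: t_def divide_right_mono)
  finally have "t \<ge> 1" .
  moreover have "a * t * t - E * t + 2 * E = (s * s - E * (E - 8 * a)) / (4 * a)"
    using assms by (simp add: t_def field_simps)
  ultimately show ?thesis
    using that s(1) by simp
qed

lemma hyperplane_projs_orthogonal:
  assumes orth: "cinner u e = 0" "cinner u w = 0" "cinner e w = 0"
    and g: "g * cnj g * cinner w w = (complex_of_real t - 1) * cinner e e"
    and k: "k = (complex_of_real t * l) *s u + 1 *s e + g *s w" "k \<noteq> 0"
  shows "cinner (hyperplane_proj k u) (hyperplane_proj k (l *s u + e)) = 0"
proof -
  have "cinner (1 *s u + 0 *s e + 0 *s w) (l *s u + 1 *s e + 0 *s w) * cinner k k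
      = cinner (1 *s u + 0 *s e + 0 *s w) k * cinner k (l *s u + 1 *s e + 0 *s w)"
    unfolding k(1) cinner_orthogonal_triple[OF orth] using g by (simp add: algebra_simps) algebra
  then show ?thesis
    using k(2) by (simp add: cinner_hyperplane_proj field_simps)
qed

(* For v = l u + e, the vectors k = t l u + e \<plusminus> g w satisfy <u,v><k,k> = <u,k><k,v> once
   |g|^2 |w|^2 = (t - 1)|e|^2, and they are orthogonal iff a t^2 - |e|^2 t + 2|e|^2 = 0 with
   a = |l|^2 |u|^2. A root t \<ge> 1 exists iff |e|^2 \<ge> 8a: this is where the constant 9 comes from. *)
lemma exists_orthogonal_hyperplane_pair_coords:
  assumes orth: "cinner u e = 0" "cinner u w = 0" "cinner e w = 0" and "w \<noteq> 0"
    and la: "l * cnj l * cinner u u = complex_of_real a" and "a > 0" "8 * a \<le> inner e e"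
  obtains k1 k2 where "k1 \<noteq> 0" "k2 \<noteq> 0" "cinner k1 k2 = 0"
    "cinner (hyperplane_proj k1 u) (hyperplane_proj k1 (l *s u + e)) = 0"
    "cinner (hyperplane_proj k2 u) (hyperplane_proj k2 (l *s u + e)) = 0"
proof -
  define E where "E = inner e e"
  obtain t where t: "t \<ge> 1" "a * t * t - E * t + 2 * E = 0"
    using quadratic_root_ge_1 \<open>a > 0\<close> \<open>8 * a \<le> inner e e\<close> unfolding E_def by blast
  have "E > 0"
    using \<open>a > 0\<close> \<open>8 * a \<le> inner e e\<close> unfolding E_def by linarith
  define g where "g = sqrt ((t - 1) * E / inner w w)"
  have "g * g * inner w w = (t - 1) * E"
    using t(1) \<open>E > 0\<close> \<open>w \<noteq> 0\<close> by (simp add: g_def)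
  then have g: "complex_of_real g * cnj (complex_of_real g) * cinner w w
      = (complex_of_real t - 1) * cinner e e"
    by (metis E_def cinner_self complex_cnj_complex_of_real of_real_1 of_real_diff of_real_mult)
  then have g': "(- complex_of_real g) * cnj (- complex_of_real g) * cinner w w
      = (complex_of_real t - 1) * cinner e e"
    by simp
  define k1 where "k1 = (complex_of_real t * l) *s u + 1 *s e + complex_of_real g *s w"
  define k2 where "k2 = (complex_of_real t * l) *s u + 1 *s e + (- complex_of_real g) *s w"
  have "cinner k1 (0 *s u + 1 *s e + 0 *s w) = cinner e e"
    "cinner k2 (0 *s u + 1 *s e + 0 *s w) = cinner e e"
    unfolding k1_def k2_def cinner_orthogonal_triple[OF orth] by simp_all
  then have "k1 \<noteq> 0" "k2 \<noteq> 0"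
    using \<open>E > 0\<close> by (auto simp: E_def cinner_self)
  moreover have "cinner k1 k2 = 0"
  proof -
    have "complex_of_real a * complex_of_real t * complex_of_real t
        - cinner e e * complex_of_real t + 2 * cinner e e = 0"
      using arg_cong[OF t(2), of complex_of_real] by (simp add: E_def cinner_self)
    then show ?thesis
      unfolding k1_def k2_def cinner_orthogonal_triple[OF orth] using g la
      by (simp add: algebra_simps) algebra
  qed
  moreover note hyperplane_projs_orthogonal[OF orth g k1_def \<open>k1 \<noteq> 0\<close>]
    hyperplane_projs_orthogonal[OF orth g' k2_def \<open>k2 \<noteq> 0\<close>]
  ultimately show ?thesis
    by (rule that)
qed

lemma exists_orthogonal_hyperplane_pair:
  assumes c: "cinner u v \<noteq> 0"
    and ineq: "9 * (cmod (cinner u v))^2 \<le> inner u u * inner v v"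
    and w: "w \<noteq> 0" "cinner w u = 0" "cinner w v = 0"
  obtains k1 k2 where "k1 \<noteq> 0" "k2 \<noteq> 0" "cinner k1 k2 = 0"
    "cinner (hyperplane_proj k1 u) (hyperplane_proj k1 v) = 0"
    "cinner (hyperplane_proj k2 u) (hyperplane_proj k2 v) = 0"
proof -
  define l where "l = cinner v u / cinner u u"
  define e where "e = hyperplane_proj u v"
  define a where "a = (cmod (cinner u v))^2 / inner u u"
  have u: "u \<noteq> 0"
    using c by auto
  have v: "v = l *s u + e"
    by (simp add: e_def hyperplane_proj_def l_def)
  have orth: "cinner u e = 0" "cinner u w = 0" "cinner e w = 0"
    using cinner_commute_eq_0 cinner_hyperplane_proj_eq_0 cinner_hyperplane_proj_right w
    unfolding e_def by metis+
  have la: "l * cnj l * cinner u u = complex_of_real a"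
    using u by (simp add: l_def a_def cinner_commute[of v u] cinner_self complex_mult_cnj
      cmod_power2 field_simps)
  have "a > 0"
    using u c by (simp add: a_def)
  have "inner e e = inner v v - a"
    using inner_hyperplane_proj_self[of u v] by (simp add: e_def a_def cinner_commute[of v u])
  then have "8 * a \<le> inner e e"
    using ineq u by (simp add: a_def field_simps)
  then show ?thesis
    using exists_orthogonal_hyperplane_pair_coords[OF orth \<open>w \<noteq> 0\<close> la \<open>a > 0\<close>] that
    unfolding v[symmetric] by blast
qed

lemma hmeet_plane_ortho_sum_subset:
  assumes "cinner u w = 0" "inner w w = inner u u"
  shows "hmeet (hjoin (line u) (line w)) (ortho (line (u + w))) \<subseteq> line (u - w)"
proof
  fix x assume x: "x \<in> hmeet (hjoin (line u) (line w)) (ortho (line (u + w)))"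
  then obtain a b where x_eq: "x = a *s u + b *s w"
    by (auto simp: hmeet_def hjoin_def mem_line_iff)
  have "cinner x (u + w) = 0"
    using x vec.span_base[of "u + w" "{u + w}"] by (auto simp: hmeet_def ortho_def)
  then have "(a + b) * complex_of_real (inner u u) = 0"
    using assms cinner_commute_eq_0[OF assms(1)]
    by (simp add: x_eq cinner_add_left cinner_add_right cinner_scale_left cinner_self algebra_simps)
  then have "x = a *s (u - w)"
    using assms(2) by (auto simp: x_eq add_eq_0_iff vec.scale_right_diff_distrib)
  then show "x \<in> line (u - w)"
    by (auto simp: mem_line_iff)
qed

(* With r = |<u,v>|^2 / (|u|^2 |v|^2), the two new pairs have squared cosines r/2 and r/(2 - r). *)
lemma rotation_angle_bounds:
  fixes M :: real
  assumes w: "cinner w u = 0" "cinner w v = 0" "inner w w = inner u u"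
    and "u \<noteq> 0" "M \<ge> 0"
    and uv: "(1 + 2 * M) * (cmod (cinner u v))^2 \<le> 2 * M * inner u u * inner v v"
  shows "(1 + M) * (cmod (cinner (u + w) v))^2 \<le> M * inner (u + w) (u + w) * inner v v"
    and "(1 + M) * (cmod (cinner (u - w) (hyperplane_proj (u + w) v)))^2
      \<le> M * inner (u - w) (u - w) * inner (hyperplane_proj (u + w) v) (hyperplane_proj (u + w) v)"
proof -
  define U V c where "U = inner u u" and "V = inner v v" and "c = (cmod (cinner u v))^2"
  have "U > 0" "0 \<le> M * c"
    using \<open>u \<noteq> 0\<close> \<open>M \<ge> 0\<close> by (simp_all add: U_def c_def)
  have uv': "(1 + 2 * M) * c \<le> 2 * M * U * V"
    using uv by (simp add: U_def V_def c_def)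
  have uw: "cinner u w = 0"
    using cinner_commute_eq_0[OF w(1)] .
  then have "inner u w = 0"
    using Re_cinner[of u w] by simp
  then have norms: "inner (u + w) (u + w) = 2 * U" "inner (u - w) (u - w) = 2 * U"
    using w(3) by (simp_all add: U_def algebra_simps inner_commute[of w u])
  have cinners: "cinner (u + w) v = cinner u v" "cinner (u - w) v = cinner u v"
    using w(2) by (simp_all add: cinner_add_left cinner_diff_left)
  have "cinner (u - w) (u + w) = 0"
    using w(3) uw cinner_commute_eq_0[OF uw]
    by (simp add: cinner_add_right cinner_diff_left cinner_self)
  then have "cinner (u - w) (hyperplane_proj (u + w) v) = cinner u v"
    using cinners(2) by (simp add: cinner_hyperplane_proj_right)
  moreover have "inner (hyperplane_proj (u + w) v) (hyperplane_proj (u + w) v) = V - c / (2 * U)"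
    using inner_hyperplane_proj_self[of "u + w" v] norms(1) cinners(1)
    by (simp add: V_def c_def cinner_commute[of v "u + w"])
  moreover have "M * (2 * U) * (V - c / (2 * U)) = 2 * M * U * V - M * c"
    using \<open>U > 0\<close> by (simp add: field_simps)
  then have "(1 + M) * c \<le> M * (2 * U) * (V - c / (2 * U))"
    using uv' by (simp add: algebra_simps)
  ultimately show "(1 + M) * (cmod (cinner (u - w) (hyperplane_proj (u + w) v)))^2
      \<le> M * inner (u - w) (u - w) * inner (hyperplane_proj (u + w) v) (hyperplane_proj (u + w) v)"
    unfolding norms(2) by (simp only: c_def)
  have "(1 + M) * c \<le> M * (2 * U) * V"
    using uv' \<open>0 \<le> M * c\<close> by (simp add: algebra_simps)
  then show "(1 + M) * (cmod (cinner (u + w) v))^2 \<le> M * inner (u + w) (u + w) * inner v v"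
    unfolding norms(1) cinners(1) by (simp only: c_def V_def)
qed

(* The axioms of PQM_d used for (\<wedge>') and (\<pi>_e). *)
locale pqm_core =
  fixes R :: "'n::finite cvec set \<Rightarrow> 'a \<Rightarrow> bool" and proj :: "'n cvec set \<Rightarrow> 'a \<Rightarrow> 'a"
  assumes R_top: "R htop x"
    and R_mono: "vec.subspace p \<Longrightarrow> vec.subspace q \<Longrightarrow> p \<subseteq> q \<Longrightarrow> R p x \<Longrightarrow> R q x"
    and R_compatible_hmeet: "vec.subspace p \<Longrightarrow> vec.subspace q \<Longrightarrow> compatible p q \<Longrightarrow>
      R p x \<Longrightarrow> R q x \<Longrightarrow> R (hmeet p q) x"
    and R_proj: "vec.subspace p \<Longrightarrow> vec.subspace q \<Longrightarrow> R p x \<Longrightarrow> R (sasaki p q) (proj q x)"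
    and R_bot_proj_proj: "vec.subspace p \<Longrightarrow> vec.subspace q \<Longrightarrow> p \<subseteq> q \<Longrightarrow>
      R hbot (proj p (proj q x)) \<Longrightarrow> R hbot (proj p x)"
    and R_ortho_if_bot_proj: "vec.subspace q \<Longrightarrow> R hbot (proj q x) \<Longrightarrow> R (ortho q) x"
begin

definition exclusive :: "'n cvec set \<Rightarrow> 'n cvec set \<Rightarrow> bool" where
  "exclusive a b \<longleftrightarrow> (\<forall>x. R a x \<longrightarrow> R b x \<longrightarrow> R hbot x)"

lemma exclusive_sym: "exclusive a b \<Longrightarrow> exclusive b a"
  by (auto simp: exclusive_def)

lemma exclusive_antimono:
  assumes "exclusive a b" "a' \<subseteq> a" "b' \<subseteq> b"
    and "vec.subspace a" "vec.subspace b" "vec.subspace a'" "vec.subspace b'"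
  shows "exclusive a' b'"
  using assms R_mono unfolding exclusive_def by blast

lemma exclusive_zero:
  assumes "vec.subspace a" "a \<subseteq> {0}"
  shows "exclusive a b"
proof -
  have "a = hbot"
    using assms vec.subspace_0 by (auto simp: hbot_def)
  then show ?thesis
    by (simp add: exclusive_def)
qed

lemma exclusive_if_subset_ortho:
  assumes p: "vec.subspace p" and q: "vec.subspace q" and "p \<subseteq> ortho q"
  shows "exclusive p q"
proof -
  have "hmeet p q = hbot" and "hmeet p (ortho q) = p"
    using assms mem_ortho_self vec.subspace_0 by (auto simp: hmeet_def hbot_def)
  then have "compatible p q"
    using hjoin_absorb[OF p] vec.subspace_0[OF p] by (simp add: compatible_def hbot_def
      vec.subspace_def)
  then show ?thesis
    using R_compatible_hmeet[OF p q] \<open>hmeet p q = hbot\<close> by (auto simp: exclusive_def)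
qed

lemma exclusive_lines_if_orthogonal: "cinner u v = 0 \<Longrightarrow> exclusive (line u) (line v)"
  by (simp add: exclusive_if_subset_ortho line_subset_ortho_line vec.subspace_span)

lemma R_line_if_hyperplane_projs_orthogonal:
  assumes "cinner (hyperplane_proj k u) (hyperplane_proj k v) = 0"
    and "R (line u) x" "R (line v) x"
  shows "R (line k) x"
proof -
  let ?h = "ortho (line k)"
  have "R (line (hyperplane_proj k u)) (proj ?h x)" "R (line (hyperplane_proj k v)) (proj ?h x)"
    using R_mono[OF _ _ sasaki_line_subset R_proj] assms(2,3)
    by (simp_all add: vec.subspace_span vec_subspace_ortho sasaki_def vec_subspace_hmeet
        vec_subspace_hjoin)
  then have "R hbot (proj ?h x)"
    using exclusive_lines_if_orthogonal[OF assms(1)] by (simp add: exclusive_def)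
  then show ?thesis
    using R_ortho_if_bot_proj[of ?h] by (simp add: vec_subspace_ortho ortho_line_ortho)
qed

lemma exclusive_split:
  assumes a: "vec.subspace a" and b: "vec.subspace b" and "e \<in> a"
    and "exclusive (hmeet a (ortho (line e))) (sasaki b (ortho (line e)))"
    and "exclusive (line e) b"
  shows "exclusive a b"
  unfolding exclusive_def
proof (intro allI impI)
  fix x assume "R a x" "R b x"
  let ?h = "ortho (line e)"
  have "sasaki a ?h = hmeet a ?h"
    using sasaki_eq_hmeet[OF a] line_subset[OF a \<open>e \<in> a\<close>]
    by (simp add: ortho_line_ortho hmeet_def Int_commute)
  moreover have "R (sasaki a ?h) (proj ?h x)"
    by (rule R_proj[OF a vec_subspace_ortho \<open>R a x\<close>])
  ultimately have "R (hmeet a ?h) (proj ?h x)"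
    by simp
  moreover have "R (sasaki b ?h) (proj ?h x)"
    by (rule R_proj[OF b vec_subspace_ortho \<open>R b x\<close>])
  ultimately have "R hbot (proj ?h x)"
    using assms(4) by (simp add: exclusive_def)
  then have "R (line e) x"
    using R_ortho_if_bot_proj[of ?h] by (simp add: vec_subspace_ortho ortho_line_ortho)
  then show "R hbot x"
    using assms(5) \<open>R b x\<close> by (simp add: exclusive_def)
qed

lemma exclusive_lines_if_ortho_witness:
  assumes "9 * (cmod (cinner u v))^2 \<le> inner u u * inner v v"
    and "w \<noteq> 0" "cinner w u = 0" "cinner w v = 0"
  shows "exclusive (line u) (line v)"
proof (cases "cinner u v = 0")
  case True
  then show ?thesis
    by (rule exclusive_lines_if_orthogonal)
next
  case False
  then obtain k1 k2 where k: "cinner k1 k2 = 0"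
    "cinner (hyperplane_proj k1 u) (hyperplane_proj k1 v) = 0"
    "cinner (hyperplane_proj k2 u) (hyperplane_proj k2 v) = 0"
    using exists_orthogonal_hyperplane_pair[OF False assms] by blast
  show ?thesis
    unfolding exclusive_def
  proof (intro allI impI)
    fix x assume "R (line u) x" "R (line v) x"
    then have "R (line k1) x" "R (line k2) x"
      using R_line_if_hyperplane_projs_orthogonal k(2,3) by blast+
    then show "R hbot x"
      using exclusive_lines_if_orthogonal[OF k(1)] by (simp add: exclusive_def)
  qed
qed

lemma exclusive_lines_by_rotation:
  assumes w: "cinner w u = 0" "cinner w v = 0" "inner w w = inner u u"
    and "exclusive (line (u + w)) (line v)"
    and "exclusive (line (u - w)) (line (hyperplane_proj (u + w) v))"
  shows "exclusive (line u) (line v)"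
proof -
  let ?A = "hjoin (line u) (line w)" and ?h = "ortho (line (u + w))"
  have A: "vec.subspace ?A"
    by (simp add: vec_subspace_hjoin vec.subspace_span)
  have "line u \<subseteq> ?A" "u + w \<in> ?A"
    unfolding hjoin_eq_span[OF vec.subspace_span vec.subspace_span]
    by (auto intro: vec.span_base vec.span_add)
  have "exclusive (hmeet ?A ?h) (sasaki (line v) ?h)"
    using assms(5) hmeet_plane_ortho_sum_subset[OF cinner_commute_eq_0[OF w(1)] w(3)]
      sasaki_line_subset
    by (rule exclusive_antimono) (simp_all add: A vec.subspace_span vec_subspace_hmeet
        vec_subspace_ortho sasaki_def vec_subspace_hjoin)
  then have "exclusive ?A (line v)"
    using exclusive_split[OF A vec.subspace_span \<open>u + w \<in> ?A\<close>] assms(4) by blast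
  then show ?thesis
    using \<open>line u \<subseteq> ?A\<close> by (rule exclusive_antimono) (simp_all add: A vec.subspace_span)
qed

definition lines_exclusive_upto :: "real \<Rightarrow> bool" where
  "lines_exclusive_upto M \<longleftrightarrow> (\<forall>u v.
     (1 + M) * (cmod (cinner u v))^2 \<le> M * inner u u * inner v v \<longrightarrow> exclusive (line u) (line v))"

context
  assumes dim_ge_3: "CARD('n) \<ge> 3"
begin

lemma lines_exclusive_upto_eighth: "lines_exclusive_upto (1/8)"
  unfolding lines_exclusive_upto_def
proof (intro allI impI)
  fix u v :: "'n cvec"
  assume "(1 + 1/8) * (cmod (cinner u v))^2 \<le> 1/8 * inner u u * inner v v"
  moreover obtain w where "inner w w = 1" "cinner w u = 0" "cinner w v = 0"
    using exists_ortho_pair[OF dim_ge_3, of 1] by auto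
  moreover from this(1) have "w \<noteq> 0"
    by auto
  moreover have "9 * (cmod (cinner u v))^2 \<le> inner u u * inner v v"
    using calculation(1) by (simp add: field_simps)
  ultimately show "exclusive (line u) (line v)"
    using exclusive_lines_if_ortho_witness[of u v w] by auto
qed

lemma lines_exclusive_upto_double:
  assumes "M \<ge> 0" and M: "lines_exclusive_upto M"
  shows "lines_exclusive_upto (2 * M)"
  unfolding lines_exclusive_upto_def
proof (intro allI impI)
  fix u v :: "'n cvec"
  assume uv: "(1 + 2 * M) * (cmod (cinner u v))^2 \<le> 2 * M * inner u u * inner v v"
  show "exclusive (line u) (line v)"
  proof (cases "u = 0")
    case True
    then show ?thesis
      by (simp add: exclusive_zero vec.subspace_span)
  next
    case False
    then have "inner u u > 0"
      by simp
    then obtain w where "inner w w = inner u u" "cinner w u = 0" "cinner w v = 0"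
      using exists_ortho_pair[OF dim_ge_3] by blast
    then have w: "cinner w u = 0" "cinner w v = 0" "inner w w = inner u u"
      by simp_all
    show ?thesis
      using exclusive_lines_by_rotation[OF w] rotation_angle_bounds[OF w False \<open>M \<ge> 0\<close> uv] M
      unfolding lines_exclusive_upto_def by blast
  qed
qed

lemma lines_exclusive_upto_pow: "lines_exclusive_upto (2 ^ n / 8)"
proof (induction n)
  case 0
  then show ?case
    using lines_exclusive_upto_eighth by simp
next
  case (Suc n)
  then show ?case
    using lines_exclusive_upto_double[of "2 ^ n / 8"] by (simp add: mult.commute)
qed

lemma exclusive_lines:
  assumes "(cmod (cinner u v))^2 < inner u u * inner v v"
  shows "exclusive (line u) (line v)"
proof -
  define c D where "c = (cmod (cinner u v))^2" and "D = inner u u * inner v v - c"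
  have "D > 0"
    using assms by (simp add: c_def D_def)
  obtain n :: nat where "8 * c / D < n"
    using reals_Archimedean2 by blast
  also have "real n < 2 ^ n"
    using of_nat_less_iff[where 'a = real, THEN iffD2, OF less_exp[of n]] by simp
  finally have "8 * c \<le> 2 ^ n * D"
    using \<open>D > 0\<close> by (simp add: field_simps)
  then have "(1 + 2 ^ n / 8) * c \<le> 2 ^ n / 8 * inner u u * inner v v"
    by (simp add: D_def algebra_simps)
  then show ?thesis
    using lines_exclusive_upto_pow[of n] by (simp add: lines_exclusive_upto_def c_def)
qed

lemma exclusive_if_inter_eq_0_dim_le_1:
  assumes a: "vec.subspace a" "vec.dim a \<le> 1" and b: "vec.subspace b" "vec.dim b \<le> 1"
    and "a \<inter> b \<subseteq> {0}"
  shows "exclusive a b"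
proof (cases rule: dim_le_1_cases[OF a])
  case a_line: (2 e)
  show ?thesis
  proof (cases rule: dim_le_1_cases[OF b])
    case b_line: (2 f)
    then have "f \<notin> line e"
      using \<open>a \<inter> b \<subseteq> {0}\<close> a_line vec.span_base[of f "{f}"] by blast
    then show ?thesis
      using cmod_cinner_sq_less[OF \<open>e \<noteq> 0\<close>] exclusive_lines a_line b_line by blast
  qed (use exclusive_zero exclusive_sym b in blast)
qed (use exclusive_zero a in blast)

lemma exclusive_if_inter_eq_0_step:
  assumes a: "vec.subspace a" and b: "vec.subspace b" and "a \<inter> b \<subseteq> {0}" "2 \<le> vec.dim a"
    and IH: "\<And>a' b'. vec.subspace a' \<Longrightarrow> vec.subspace b' \<Longrightarrow> a' \<inter> b' \<subseteq> {0} \<Longrightarrow>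
      vec.dim a' + vec.dim b' < vec.dim a + vec.dim b \<Longrightarrow> exclusive a' b'"
  shows "exclusive a b"
proof -
  obtain e where "e \<in> a" "e \<noteq> 0"
    using \<open>2 \<le> vec.dim a\<close> vec.dim_eq_0[of a] by (metis not_numeral_le_zero subsetI singletonI)
  let ?h = "ortho (line e)"
  have "exclusive (hmeet a ?h) (sasaki b ?h)"
  proof (rule IH)
    show "vec.dim (hmeet a ?h) + vec.dim (sasaki b ?h) < vec.dim a + vec.dim b"
      using dim_hmeet_ortho_line_less[OF a \<open>e \<in> a\<close> \<open>e \<noteq> 0\<close>] dim_sasaki_ortho_line_le[of b e]
      by linarith
  qed (simp_all add: a b vec_subspace_hmeet vec_subspace_ortho vec_subspace_sasaki
      hmeet_ortho_line_inter_sasaki[OF a \<open>e \<in> a\<close> \<open>a \<inter> b \<subseteq> {0}\<close>])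
  moreover have "exclusive (line e) b"
  proof (rule IH[OF vec.subspace_span b])
    show "vec.dim (line e) + vec.dim b < vec.dim a + vec.dim b"
      using \<open>e \<noteq> 0\<close> \<open>2 \<le> vec.dim a\<close> by simp
    show "line e \<inter> b \<subseteq> {0}"
      using line_subset[OF a \<open>e \<in> a\<close>] \<open>a \<inter> b \<subseteq> {0}\<close> by blast
  qed
  ultimately show ?thesis
    by (rule exclusive_split[OF a b \<open>e \<in> a\<close>])
qed

lemma exclusive_if_inter_eq_0:
  "vec.subspace a \<Longrightarrow> vec.subspace b \<Longrightarrow> a \<inter> b \<subseteq> {0} \<Longrightarrow> exclusive a b"
proof (induction "vec.dim a + vec.dim b" arbitrary: a b rule: less_induct)
  case less
  consider "vec.dim a \<le> 1" "vec.dim b \<le> 1" | "2 \<le> vec.dim a" | "2 \<le> vec.dim b"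
    by linarith
  then show ?case
  proof cases
    case 1
    then show ?thesis
      using exclusive_if_inter_eq_0_dim_le_1 less.prems by blast
  next
    case 2
    then show ?thesis
      using exclusive_if_inter_eq_0_step less by blast
  next
    case 3
    have "exclusive b a"
      by (rule exclusive_if_inter_eq_0_step)
        (use 3 less in \<open>auto simp: Int_commute add.commute\<close>)
    then show ?thesis
      by (rule exclusive_sym)
  qed
qed

lemma R_hmeet:
  assumes p: "vec.subspace p" and q: "vec.subspace q" and "R p x" "R q x"
  shows "R (hmeet p q) x"
proof -
  let ?m = "hmeet p q"
  let ?t = "ortho ?m"
  have m: "vec.subspace ?m"
    by (rule vec_subspace_hmeet[OF p q])
  have "ortho ?t \<subseteq> p" "ortho ?t \<subseteq> q"
    unfolding ortho_ortho[OF m] by (simp_all add: hmeet_def)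
  moreover have "R (sasaki p ?t) (proj ?t x)" "R (sasaki q ?t) (proj ?t x)"
    using R_proj vec_subspace_ortho p q \<open>R p x\<close> \<open>R q x\<close> by blast+
  ultimately have "R (hmeet ?t p) (proj ?t x)" "R (hmeet ?t q) (proj ?t x)"
    by (simp_all add: sasaki_eq_hmeet p q)
  moreover have "hmeet ?t p \<inter> hmeet ?t q \<subseteq> {0}"
    using mem_ortho_self[of _ ?m] by (auto simp: hmeet_def)
  then have "exclusive (hmeet ?t p) (hmeet ?t q)"
    using exclusive_if_inter_eq_0 by (simp add: vec_subspace_hmeet vec_subspace_ortho p q)
  ultimately have "R hbot (proj ?t x)"
    by (simp add: exclusive_def)
  then have "R (ortho ?t) x"
    by (rule R_ortho_if_bot_proj[OF vec_subspace_ortho])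
  then show ?thesis
    unfolding ortho_ortho[OF m] .
qed

lemma R_sdelta_if_R_proj:
  assumes p: "vec.subspace p" and q: "vec.subspace q" and "R p (proj q x)"
  shows "R (sdelta p q) x"
proof -
  let ?m = "hmeet p q"
  let ?s = "hmeet q (ortho ?m)"
  have m: "vec.subspace ?m" and s: "vec.subspace ?s"
    by (simp_all add: vec_subspace_hmeet vec_subspace_ortho p q)
  have "R q (proj q x)"
    by (rule R_proj[OF vec_subspace_htop q R_top, unfolded sasaki_htop])
  then have "R ?m (proj q x)"
    by (rule R_hmeet[OF p q \<open>R p (proj q x)\<close>])
  then have "R (sasaki ?m ?s) (proj ?s (proj q x))"
    by (rule R_proj[OF m s])
  moreover have "sasaki ?m ?s \<subseteq> hbot"
  proof (rule sasaki_subset_hbot)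
    have "?s \<subseteq> ortho ?m"
      by (simp add: hmeet_def)
    then show "?m \<subseteq> ortho ?s"
      using subset_ortho_ortho[of ?m] ortho_antimono by blast
  qed
  ultimately have "R hbot (proj ?s (proj q x))"
    using R_mono[OF vec_subspace_sasaki[OF m s] vec_subspace_hbot] by blast
  then have "R (ortho ?s) x"
    using R_bot_proj_proj[OF s q] R_ortho_if_bot_proj[OF s] by (simp add: hmeet_def)
  moreover have "ortho ?s \<subseteq> sdelta p q"
    using ortho_hmeet_ortho_subset[OF q m] by (simp add: sdelta_def hmeet_def)
  ultimately show ?thesis
    using R_mono[OF vec_subspace_ortho vec_subspace_sdelta[OF p q]] by blast
qed

end

end

locale pqm'_core =
  fixes R :: "'n::finite cvec set \<Rightarrow> 'a \<Rightarrow> bool" and proj :: "'n cvec set \<Rightarrow> 'a \<Rightarrow> 'a"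
  assumes R_mono: "vec.subspace p \<Longrightarrow> vec.subspace q \<Longrightarrow> p \<subseteq> q \<Longrightarrow> R p x \<Longrightarrow> R q x"
    and R_proj: "vec.subspace p \<Longrightarrow> vec.subspace q \<Longrightarrow> R p x \<Longrightarrow> R (sasaki p q) (proj q x)"
    and R_sdelta_if_R_proj: "vec.subspace p \<Longrightarrow> vec.subspace q \<Longrightarrow> R p (proj q x) \<Longrightarrow>
      R (sdelta p q) x"
begin

lemma R_ortho_if_bot_proj: "vec.subspace q \<Longrightarrow> R hbot (proj q x) \<Longrightarrow> R (ortho q) x"
  using R_sdelta_if_R_proj[OF vec_subspace_hbot] by (simp add: sdelta_hbot)

lemma R_bot_proj_proj:
  assumes p: "vec.subspace p" and q: "vec.subspace q" and "p \<subseteq> q"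
    and "R hbot (proj p (proj q x))"
  shows "R hbot (proj p x)"
proof -
  let ?S = "sdelta (ortho p) q"
  have S: "vec.subspace ?S"
    by (simp add: vec_subspace_sdelta vec_subspace_ortho q)
  have "R (ortho p) (proj q x)"
    using R_ortho_if_bot_proj[OF p] assms(4) .
  then have "R ?S x"
    by (rule R_sdelta_if_R_proj[OF vec_subspace_ortho q])
  then have "R (sasaki ?S p) (proj p x)"
    by (rule R_proj[OF S p])
  moreover have "?S \<subseteq> ortho p"
    unfolding sdelta_def
    by (rule hjoin_subset[OF vec_subspace_ortho]) (auto simp: hmeet_def ortho_antimono[OF \<open>p \<subseteq> q\<close>])
  then have "sasaki ?S p \<subseteq> hbot"
    by (rule sasaki_subset_hbot)
  ultimately show ?thesis
    using R_mono[OF vec_subspace_sasaki[OF S p] vec_subspace_hbot] by blast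
qed

end

lemma pqm_core_if_PQM: "PQM u proj R \<Longrightarrow> pqm_core R proj"
  unfolding PQM_def Ball_def mem_Hd_iff by unfold_locales meson+

lemma pqm'_core_if_PQM': "PQM' u proj R \<Longrightarrow> pqm'_core R proj"
  unfolding PQM'_def Ball_def mem_Hd_iff by unfold_locales meson+

theorem mainTheorem16:
  fixes u :: "'n::finite cmat \<Rightarrow> 'a \<Rightarrow> 'a"
    and proj :: "'n cvec set \<Rightarrow> 'a \<Rightarrow> 'a"
    and R :: "'n cvec set \<Rightarrow> 'a \<Rightarrow> bool"
  assumes "CARD('n) \<ge> 3"
  shows "PQM u proj R \<longleftrightarrow> PQM' u proj R"
proof
  assume "PQM u proj R"
  then interpret pqm_core R proj
    by (rule pqm_core_if_PQM)
  show "PQM' u proj R"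
    using \<open>PQM u proj R\<close> R_hmeet[OF assms] R_sdelta_if_R_proj[OF assms]
    unfolding PQM_def PQM'_def Ball_def mem_Hd_iff by (elim conjE) (intro conjI; meson)
next
  assume "PQM' u proj R"
  then interpret pqm'_core R proj
    by (rule pqm'_core_if_PQM')
  show "PQM u proj R"
    using \<open>PQM' u proj R\<close> R_ortho_if_bot_proj R_bot_proj_proj
    unfolding PQM_def PQM'_def Ball_def mem_Hd_iff by (elim conjE) (intro conjI; meson)
qed
end
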